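(* Let $G$ be a finitely generated group. Suppose there exist constants $\alpha,\beta>0$ such that every finite symmetric generating set $U$ of $G$ satisfies $|U^n|\geqslant(\alpha|U|)^{\beta n}$ for every $n\in\mathbb{N}$. Then either $G$ is finite with $|G|\leqslant1/\alpha$, or $G$ has uniform exponential growth.
   Context: For a finite generating set $S$, $B_S(n)$ is the ball of radius $n$ about the identity in the word metric of $S$, $\omega(G,S)=\lim_{n\to\infty}|B_S(n)|^{1/n}$, and $\omega(G)=\inf_S\omega(G,S)$ over finite generating sets; $G$ has uniform exponential growth if $\omega(G)>1$. $U^n=\{u_1\cdots u_n:u_i\in U\}$. *)

theory Defs
  imports "HOL-Analysis.Analysis" "HOL-Algebra.Algebra"
begin

fun set_power :: "('a, 'b) monoid_scheme \<Rightarrow> 'a set \<Rightarrow> nat \<Rightarrow> 'a set" where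
  "set_power G U 0 = {\<one>\<^bsub>G\<^esub>}"
| "set_power G U (Suc n) = set_power G U n <#>\<^bsub>G\<^esub> U"

definition fin_gen_set :: "('a, 'b) monoid_scheme \<Rightarrow> 'a set \<Rightarrow> bool" where
  "fin_gen_set G S \<longleftrightarrow> finite S \<and> S \<subseteq> carrier G \<and> generate G S = carrier G"

definition finitely_generated :: "('a, 'b) monoid_scheme \<Rightarrow> bool" where
  "finitely_generated G \<longleftrightarrow> (\<exists>S. fin_gen_set G S)"

text \<open>Ball of radius n in the word metric of S: words of length at most n in S and S^-1.\<close>
definition word_ball :: "('a, 'b) monoid_scheme \<Rightarrow> 'a set \<Rightarrow> nat \<Rightarrow> 'a set" where
  "word_ball G S n = set_power G (S \<union> (\<lambda>s. inv\<^bsub>G\<^esub> s) ` S \<union> {\<one>\<^bsub>G\<^esub>}) n"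

definition growth_rate :: "('a, 'b) monoid_scheme \<Rightarrow> 'a set \<Rightarrow> real" where
  "growth_rate G S = lim (\<lambda>n. real (card (word_ball G S n)) powr (1 / real n))"

definition min_growth_rate :: "('a, 'b) monoid_scheme \<Rightarrow> real" where
  "min_growth_rate G = (INF S \<in> {S. fin_gen_set G S}. growth_rate G S)"

definition uniform_exponential_growth :: "('a, 'b) monoid_scheme \<Rightarrow> bool" where
  "uniform_exponential_growth G \<longleftrightarrow> min_growth_rate G > 1"

end

theory Submission
  imports Defs
begin

text \<open>If \<open>G\<close> is finite, apply the hypothesis to \<open>U = G\<close>: then \<open>|G| \<ge> (\<alpha>|G|)\<^bsup>\<beta>n\<^esup>\<close> for all \<open>n\<close>,
  which forces \<open>\<alpha>|G| \<le> 1\<close>. If \<open>G\<close> is infinite and \<open>U\<close> is the symmetrised generating set of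
  the word metric of \<open>S\<close> (with \<open>1 \<in> U\<close>), the balls \<open>U\<^sup>n\<close> grow strictly, so \<open>V = U\<^sup>k\<close> has at
  least \<open>k + 1\<close> elements; for \<open>k \<ge> 2/\<alpha>\<close> the hypothesis applied to \<open>V\<close> gives
  \<open>|U\<^bsup>kn\<^esup>| = |V\<^sup>n| \<ge> 2\<^bsup>\<beta>n\<^esup>\<close>, i.e. \<open>\<omega>(G,S) \<ge> 2\<^bsup>\<beta>/k\<^esup>\<close> uniformly in \<open>S\<close>. The limit
  defining \<open>\<omega>(G,S)\<close> exists by Fekete's lemma, since \<open>n \<mapsto> log |U\<^sup>n|\<close> is subadditive.\<close>

lemma subadditive_le_mult_add:
  fixes b :: "nat \<Rightarrow> real"
  assumes sub: "\<And>m n. b (m + n) \<le> b m + b n"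
  shows "b (q * m + r) \<le> real q * b m + b r"
proof (induction q)
  case 0
  then show ?case by simp
next
  case (Suc q)
  have "b (Suc q * m + r) = b (m + (q * m + r))" by (simp add: algebra_simps)
  also have "\<dots> \<le> b m + b (q * m + r)" by (rule sub)
  also have "\<dots> \<le> real (Suc q) * b m + b r" using Suc by (simp add: algebra_simps)
  finally show ?case .
qed

lemma Fekete_subadditive:
  fixes b :: "nat \<Rightarrow> real"
  assumes sub: "\<And>m n. b (m + n) \<le> b m + b n" and nonneg: "\<And>n. b n \<ge> 0"
  shows "(\<lambda>n. b n / real n) \<longlonglongrightarrow> (INF n\<in>{1..}. b n / real n)"
proof -
  define L where "L = (INF n\<in>{1..}. b n / real n)"
  have bdd: "bdd_below ((\<lambda>n. b n / real n) ` {1..})"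
    by (rule bdd_belowI[of _ 0]) (use nonneg in auto)
  have L_le: "L \<le> b n / real n" if "n \<ge> 1" for n
    unfolding L_def by (rule cINF_lower[OF bdd]) (use that in auto)
  show ?thesis unfolding L_def[symmetric]
  proof (rule LIMSEQ_I)
    fix e :: real
    assume e: "e > 0"
    have "\<exists>m\<in>{1..}. b m / real m < L + e/2"
      unfolding L_def by (rule cINF_less_iff[OF _ bdd, THEN iffD1]) (use e L_def in auto)
    then obtain m where m: "m \<ge> 1" and m_close: "b m / real m < L + e/2" by auto
    define M where "M = (\<Sum>r<m. b r)"
    have M_ge: "b r \<le> M" if "r < m" for r
      unfolding M_def using that nonneg by (intro member_le_sum) auto
    obtain N :: nat where N: "real N > 2 * M / e" using reals_Archimedean2 by blast
    show "\<exists>N. \<forall>n\<ge>N. norm (b n / real n - L) < e"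
    proof (intro exI[of _ "Suc N"] allI impI)
      fix n
      assume n: "n \<ge> Suc N"
      then have n_pos: "real n > 0" by simp
      define q r where "q = n div m" and "r = n mod m"
      have n_eq: "n = q * m + r" and "r < m" unfolding q_def r_def using m by simp_all
      have "b n \<le> real q * b m + M"
        using subadditive_le_mult_add[OF sub, of q m r] M_ge[OF \<open>r < m\<close>] n_eq by simp
      also have "real q * b m = (real q * real m) * (b m / real m)" using m by simp
      also have "\<dots> \<le> real n * (b m / real m)"
      proof (rule mult_right_mono)
        show "real q * real m \<le> real n" using n_eq by (metis of_nat_le_iff of_nat_mult le_add1)
      qed (use nonneg in simp)
      finally have "b n / real n \<le> b m / real m + M / real n"
        using n_pos by (simp add: field_simps)
      moreover have "M / real n < e / 2"
      proof -
        have "2 * M < e * real N" using N e by (simp add: field_simps)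
        also have "\<dots> \<le> e * real n" using n e by simp
        finally show ?thesis using n_pos by (simp add: field_simps)
      qed
      ultimately have "b n / real n < L + e" using m_close by linarith
      then show "norm (b n / real n - L) < e" using L_le n by simp
    qed
  qed
qed

lemma submultiplicative_root_convergent:
  fixes a :: "nat \<Rightarrow> real"
  assumes submult: "\<And>m n. a (m + n) \<le> a m * a n" and ge_1: "\<And>n. a n \<ge> 1"
  shows "convergent (\<lambda>n. a n powr (1 / real n))"
proof -
  have "(\<lambda>n. ln (a n) / real n) \<longlonglongrightarrow> (INF n\<in>{1..}. ln (a n) / real n)"
  proof (rule Fekete_subadditive)
    fix m n
    have pos: "a i > 0" for i using ge_1[of i] by linarith
    then have "ln (a (m + n)) \<le> ln (a m * a n)" using submult by simp
    then show "ln (a (m + n)) \<le> ln (a m) + ln (a n)" using pos[of m] pos[of n] by (simp add: ln_mult)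
  qed (use ge_1 in simp)
  then have "(\<lambda>n. exp (ln (a n) / real n)) \<longlonglongrightarrow> exp (INF n\<in>{1..}. ln (a n) / real n)"
    by (rule tendsto_exp)
  moreover have "exp (ln (a n) / real n) = a n powr (1 / real n)" for n
    using ge_1[of n] by (simp add: powr_def)
  ultimately show ?thesis unfolding convergent_def by auto
qed

lemma powr_bounded_imp_le_one:
  fixes y \<beta> C :: real
  assumes "\<beta> > 0" and bounded: "\<And>n. y powr (\<beta> * real n) \<le> C"
  shows "y \<le> 1"
proof (rule ccontr)
  assume "\<not> y \<le> 1"
  then have "y powr \<beta> > 1" using \<open>\<beta> > 0\<close> by simp
  then obtain n where "C < (y powr \<beta>) ^ n" using real_arch_pow by blast
  also have "(y powr \<beta>) ^ n = y powr (\<beta> * real n)"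
    using \<open>\<not> y \<le> 1\<close> by (simp add: powr_realpow[symmetric] powr_powr)
  finally show False using bounded[of n] by simp
qed

lemma finite_set_mult:
  assumes "finite H" "finite K"
  shows "finite (H <#>\<^bsub>G\<^esub> K)"
  using assms unfolding set_mult_def by simp

lemma card_set_mult_le:
  assumes "finite H" "finite K"
  shows "card (H <#>\<^bsub>G\<^esub> K) \<le> card H * card K"
proof -
  have "H <#>\<^bsub>G\<^esub> K = (\<lambda>(h, k). h \<otimes>\<^bsub>G\<^esub> k) ` (H \<times> K)"
    unfolding set_mult_def by auto
  then show ?thesis
    using assms by (metis card_cartesian_product card_image_le finite_cartesian_product)
qed

definition word_gens :: "('a, 'b) monoid_scheme \<Rightarrow> 'a set \<Rightarrow> 'a set" where
  "word_gens G S = S \<union> (\<lambda>s. inv\<^bsub>G\<^esub> s) ` S \<union> {\<one>\<^bsub>G\<^esub>}"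

lemma word_ball_eq_set_power: "word_ball G S n = set_power G (word_gens G S) n"
  unfolding word_ball_def word_gens_def ..

definition power_growth_bound :: "('a, 'b) monoid_scheme \<Rightarrow> real \<Rightarrow> real \<Rightarrow> bool" where
  "power_growth_bound G \<alpha> \<beta> \<longleftrightarrow>
     (\<forall>U n. fin_gen_set G U \<longrightarrow> (\<forall>u\<in>U. inv\<^bsub>G\<^esub> u \<in> U) \<longrightarrow>
        (\<alpha> * real (card U)) powr (\<beta> * real n) \<le> real (card (set_power G U n)))"

context group
begin

lemma set_power_closed: "U \<subseteq> carrier G \<Longrightarrow> set_power G U n \<subseteq> carrier G"
  by (induction n) (simp_all add: set_mult_closed)

lemma finite_set_power: "finite U \<Longrightarrow> finite (set_power G U n)"
  by (induction n) (simp_all add: finite_set_mult)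

lemma set_power_1: "U \<subseteq> carrier G \<Longrightarrow> set_power G U 1 = U"
  using lcos_mult_one[of U] by (simp add: l_coset_eq_set_mult)

lemma set_power_add:
  assumes "U \<subseteq> carrier G"
  shows "set_power G U (m + n) = set_power G U m <#> set_power G U n"
proof (induction n)
  case 0
  show ?case using coset_mult_one[OF set_power_closed[OF assms]] by (simp add: r_coset_eq_set_mult)
next
  case (Suc n)
  then show ?case using assms by (simp add: set_mult_assoc set_power_closed)
qed

lemma set_power_mult:
  assumes "U \<subseteq> carrier G"
  shows "set_power G U (k * n) = set_power G (set_power G U k) n"
proof (induction n)
  case (Suc n)
  have "set_power G U (k * Suc n) = set_power G U (k * n) <#> set_power G U k"
    using set_power_add[OF assms, of "k * n" k] by (simp add: algebra_simps)
  then show ?case using Suc by simp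
qed simp

lemma card_set_power_add_le:
  assumes "finite U" "U \<subseteq> carrier G"
  shows "card (set_power G U (m + n)) \<le> card (set_power G U m) * card (set_power G U n)"
  unfolding set_power_add[OF assms(2)]
  using card_set_mult_le[OF finite_set_power finite_set_power] assms(1) by blast

lemma set_power_nonempty: "\<one> \<in> U \<Longrightarrow> set_power G U n \<noteq> {}"
proof (induction n)
  case (Suc n)
  then show ?case unfolding set_power.simps set_mult_def by blast
qed simp

lemma set_power_mono:
  assumes "\<one> \<in> U" "U \<subseteq> carrier G" "m \<le> n"
  shows "set_power G U m \<subseteq> set_power G U n"
  using assms(3)
proof (induction n rule: dec_induct)
  case (step n)
  have "x \<in> set_power G U (Suc n)" if "x \<in> set_power G U n" for x
  proof -
    have "x \<in> carrier G" using that set_power_closed[OF assms(2)] by blast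
    then have "x = x \<otimes> \<one>" by simp
    also have "\<dots> \<in> set_power G U n <#> U" using that assms(1) unfolding set_mult_def by blast
    finally show ?thesis by simp
  qed
  then show ?case using step by blast
qed simp

lemma set_power_inv_closed:
  assumes "U \<subseteq> carrier G" "\<forall>u\<in>U. inv u \<in> U"
  shows "\<forall>x\<in>set_power G U n. inv x \<in> set_power G U n"
proof (induction n)
  case (Suc n)
  show ?case
  proof
    fix x
    assume "x \<in> set_power G U (Suc n)"
    then obtain h u where hu: "h \<in> set_power G U n" "u \<in> U" "x = h \<otimes> u"
      unfolding set_power.simps set_mult_def by blast
    then have "h \<in> carrier G" "u \<in> carrier G" using set_power_closed assms(1) by blast+
    then have "inv x = inv u \<otimes> inv h" using hu by (simp add: inv_mult_group)
    also have "\<dots> \<in> U <#> set_power G U n"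
      unfolding set_mult_def using hu Suc assms(2) by blast
    also have "U <#> set_power G U n = set_power G U (Suc n)"
      using set_power_add[OF assms(1), of 1 n] set_power_1[OF assms(1)] by simp
    finally show "inv x \<in> set_power G U (Suc n)" .
  qed
qed simp

lemma generate_subset_UN_set_power:
  assumes "U \<subseteq> carrier G" "\<forall>u\<in>U. inv u \<in> U" "\<one> \<in> U"
  shows "generate G U \<subseteq> (\<Union>n. set_power G U n)"
proof
  fix x
  assume "x \<in> generate G U"
  then show "x \<in> (\<Union>n. set_power G U n)"
  proof (induction rule: generate.induct)
    case one
    show ?case by (metis UN_I UNIV_I set_power.simps(1) singletonI)
  next
    case (incl h)
    then show ?case using set_power_1[OF assms(1)] by blast
  next
    case (inv h)
    then show ?case using set_power_1[OF assms(1)] assms(2) by blast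
  next
    case (eng h1 h2)
    then obtain m n where "h1 \<in> set_power G U m" "h2 \<in> set_power G U n" by blast
    then have "h1 \<otimes> h2 \<in> set_power G U (m + n)"
      unfolding set_power_add[OF assms(1)] set_mult_def by blast
    then show ?case by blast
  qed
qed

lemma set_power_stable:
  assumes "set_power G U (Suc j) = set_power G U j"
  shows "set_power G U (j + m) = set_power G U j"
proof (induction m)
  case (Suc m)
  then show ?case using assms by simp
qed simp

lemma card_set_power_ge:
  assumes "U \<subseteq> carrier G" "\<forall>u\<in>U. inv u \<in> U" "\<one> \<in> U" "finite U"
    and "generate G U = carrier G" "infinite (carrier G)"
  shows "card (set_power G U j) \<ge> j + 1"
proof (induction j)
  case (Suc j)
  have subset: "set_power G U j \<subseteq> set_power G U (Suc j)"
    by (rule set_power_mono[OF assms(3,1)]) simp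
  have neq: "set_power G U (Suc j) \<noteq> set_power G U j"
  proof
    assume "set_power G U (Suc j) = set_power G U j"
    then have "set_power G U m \<subseteq> set_power G U j" for m
      using set_power_stable set_power_mono[OF assms(3,1), of m "j + m"] by fastforce
    then have "carrier G \<subseteq> set_power G U j"
      using generate_subset_UN_set_power[OF assms(1-3)] assms(5) by blast
    then show False using finite_set_power[OF assms(4)] assms(6) finite_subset by blast
  qed
  then have "card (set_power G U j) < card (set_power G U (Suc j))"
    using subset neq by (intro psubset_card_mono finite_set_power[OF assms(4)]) auto
  then show ?case using Suc.IH by linarith
qed simp

lemma fin_gen_set_carrier: "finite (carrier G) \<Longrightarrow> fin_gen_set G (carrier G)"
  unfolding fin_gen_set_def using generate_incl[of "carrier G"] generate.incl[of _ "carrier G" G]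
  by blast

lemma fin_gen_set_word_gens:
  assumes "fin_gen_set G S"
  shows "fin_gen_set G (word_gens G S)"
proof -
  have S: "S \<subseteq> carrier G" "finite S" "generate G S = carrier G"
    using assms unfolding fin_gen_set_def by auto
  then have "word_gens G S \<subseteq> carrier G" unfolding word_gens_def by auto
  moreover have "S \<subseteq> word_gens G S" unfolding word_gens_def by auto
  ultimately show ?thesis
    using S mono_generate generate_incl unfolding fin_gen_set_def word_gens_def by blast
qed

lemma word_gens_inv_closed: "S \<subseteq> carrier G \<Longrightarrow> \<forall>u\<in>word_gens G S. inv u \<in> word_gens G S"
  unfolding word_gens_def by auto

lemma fin_gen_set_set_power:
  assumes "fin_gen_set G U" "\<one> \<in> U" "k \<ge> 1"
  shows "fin_gen_set G (set_power G U k)"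
proof -
  have U: "U \<subseteq> carrier G" "finite U" "generate G U = carrier G"
    using assms(1) unfolding fin_gen_set_def by auto
  have "U \<subseteq> set_power G U k"
    using set_power_mono[OF assms(2) U(1) assms(3)] set_power_1[OF U(1)] by simp
  then show ?thesis
    using U mono_generate generate_incl set_power_closed finite_set_power
    unfolding fin_gen_set_def by (metis subset_antisym)
qed

lemma word_ball_root_tendsto_growth_rate:
  assumes "fin_gen_set G S"
  shows "(\<lambda>n. real (card (word_ball G S n)) powr (1 / real n)) \<longlonglongrightarrow> growth_rate G S"
proof -
  have U: "finite (word_gens G S)" "word_gens G S \<subseteq> carrier G" "\<one> \<in> word_gens G S"
    using fin_gen_set_word_gens[OF assms] unfolding fin_gen_set_def word_gens_def by auto
  have "convergent (\<lambda>n. real (card (set_power G (word_gens G S) n)) powr (1 / real n))"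
  proof (rule submultiplicative_root_convergent)
    show "real (card (set_power G (word_gens G S) (m + n)))
      \<le> real (card (set_power G (word_gens G S) m)) * real (card (set_power G (word_gens G S) n))"
      for m n using card_set_power_add_le[OF U(1,2)] by (metis of_nat_le_iff of_nat_mult)
    show "1 \<le> real (card (set_power G (word_gens G S) n))" for n
      using set_power_nonempty[OF U(3)] finite_set_power[OF U(1)]
      by (simp add: Suc_le_eq card_gt_0_iff)
  qed
  then show ?thesis
    unfolding growth_rate_def word_ball_eq_set_power by (rule convergent_LIMSEQ_iff[THEN iffD1])
qed

lemma card_carrier_le_if_power_growth:
  assumes "finite (carrier G)" "\<alpha> > 0" "\<beta> > 0" "power_growth_bound G \<alpha> \<beta>"
  shows "real (card (carrier G)) \<le> 1 / \<alpha>"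
proof -
  have "(\<alpha> * real (card (carrier G))) powr (\<beta> * real n) \<le> real (card (carrier G))" for n
  proof -
    have "(\<alpha> * real (card (carrier G))) powr (\<beta> * real n)
        \<le> real (card (set_power G (carrier G) n))"
      using assms(4) fin_gen_set_carrier[OF assms(1)] unfolding power_growth_bound_def by simp
    also have "\<dots> \<le> real (card (carrier G))"
      using card_mono[OF assms(1) set_power_closed] by simp
    finally show ?thesis .
  qed
  then have "\<alpha> * real (card (carrier G)) \<le> 1" using powr_bounded_imp_le_one assms(3) by blast
  then show ?thesis using assms(2) by (simp add: field_simps)
qed

lemma growth_rate_ge_if_power_growth:
  assumes "infinite (carrier G)" "fin_gen_set G S" "\<alpha> > 0" "\<beta> > 0" "power_growth_bound G \<alpha> \<beta>"
    and "k \<ge> 1" "\<alpha> * real (k + 1) \<ge> 2"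
  shows "2 powr (\<beta> / real k) \<le> growth_rate G S"
proof -
  define U where "U = word_gens G S"
  define V where "V = set_power G U k"
  have U: "fin_gen_set G U" "\<one> \<in> U" "\<forall>u\<in>U. inv u \<in> U"
    using fin_gen_set_word_gens[OF assms(2)] word_gens_inv_closed assms(2)
    unfolding U_def fin_gen_set_def word_gens_def by auto
  then have U_props: "U \<subseteq> carrier G" "finite U" "generate G U = carrier G"
    unfolding fin_gen_set_def by auto
  have V: "fin_gen_set G V" "\<forall>v\<in>V. inv v \<in> V"
    unfolding V_def using fin_gen_set_set_power[OF U(1,2) assms(6)]
      set_power_inv_closed[OF U_props(1) U(3)] by auto
  have "k + 1 \<le> card V"
    unfolding V_def by (rule card_set_power_ge[OF U_props(1) U(3,2) U_props(2,3) assms(1)])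
  then have "real (k + 1) \<le> real (card V)" by (simp only: of_nat_le_iff)
  then have "2 \<le> \<alpha> * real (card V)"
    using assms(3,7) by (smt (verit) mult_left_mono)
  have ball_ge: "2 powr (\<beta> / real k) \<le> real (card (word_ball G S (k * n))) powr (1 / real (k * n))"
    if "n \<ge> 1" for n
  proof -
    have "2 powr (\<beta> * real n) \<le> (\<alpha> * real (card V)) powr (\<beta> * real n)"
      using \<open>2 \<le> \<alpha> * real (card V)\<close> assms(4) by (intro powr_mono2) auto
    also have "\<dots> \<le> real (card (word_ball G S (k * n)))"
      using assms(5) V unfolding power_growth_bound_def word_ball_eq_set_power
        set_power_mult[OF U_props(1)] U_def[symmetric] V_def[symmetric] by blast
    finally have "(2 powr (\<beta> * real n)) powr (1 / real (k * n))
        \<le> real (card (word_ball G S (k * n))) powr (1 / real (k * n))"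
      by (intro powr_mono2) auto
    moreover have "(2 powr (\<beta> * real n)) powr (1 / real (k * n)) = 2 powr (\<beta> / real k)"
      using that assms(6) by (simp add: powr_powr)
    ultimately show ?thesis by simp
  qed
  have "strict_mono (\<lambda>n. k * n)" using assms(6) by (intro strict_monoI) simp
  then have "(\<lambda>n. real (card (word_ball G S (k * n))) powr (1 / real (k * n)))
      \<longlonglongrightarrow> growth_rate G S"
    using LIMSEQ_subseq_LIMSEQ[OF word_ball_root_tendsto_growth_rate[OF assms(2)]]
    by (simp only: comp_def)
  then show ?thesis using ball_ge by (intro LIMSEQ_le_const) auto
qed

lemma uniform_exponential_growth_if_power_growth:
  assumes "infinite (carrier G)" "finitely_generated G" "\<alpha> > 0" "\<beta> > 0"
    and "power_growth_bound G \<alpha> \<beta>"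
  shows "uniform_exponential_growth G"
proof -
  define k :: nat where "k = nat \<lceil>2 / \<alpha>\<rceil> + 1"
  have "k \<ge> 1" unfolding k_def by simp
  have "real k \<ge> 2 / \<alpha>" unfolding k_def by linarith
  then have "\<alpha> * real (k + 1) \<ge> 2" using assms(3) by (simp add: field_simps)
  obtain S where "fin_gen_set G S" using assms(2) unfolding finitely_generated_def by blast
  then have "2 powr (\<beta> / real k) \<le> min_growth_rate G"
    unfolding min_growth_rate_def using growth_rate_ge_if_power_growth assms \<open>k \<ge> 1\<close>
      \<open>\<alpha> * real (k + 1) \<ge> 2\<close> by (intro cINF_greatest) auto
  moreover have "2 powr (\<beta> / real k) > 1" using \<open>k \<ge> 1\<close> assms(4) by simp
  ultimately show ?thesis unfolding uniform_exponential_growth_def by simp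
qed

end

theorem lemma2p6:
  fixes G :: "('a, 'b) monoid_scheme" and \<alpha> \<beta> :: real
  assumes "group G"
    and "finitely_generated G"
    and "\<alpha> > 0" and "\<beta> > 0"
    and "\<And>U n. fin_gen_set G U \<Longrightarrow> (\<forall>u\<in>U. inv\<^bsub>G\<^esub> u \<in> U) \<Longrightarrow>
           real (card (set_power G U n)) \<ge> (\<alpha> * real (card U)) powr (\<beta> * real n)"
  shows "(finite (carrier G) \<and> real (card (carrier G)) \<le> 1 / \<alpha>) \<or> uniform_exponential_growth G"
proof -
  interpret group G by fact
  have bound: "power_growth_bound G \<alpha> \<beta>"
    using assms(5) unfolding power_growth_bound_def by blast
  show ?thesis
    using card_carrier_le_if_power_growth[OF _ assms(3,4) bound]
      uniform_exponential_growth_if_power_growth[OF _ assms(2,3,4) bound]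
    by blast
qed

end
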